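(* For $P\in\mathcal P(\mathcal X)$, $\Delta\ge0$ and $E\ge0$, the inverse of Blahut's exponent, $R_{\rm B}(E\mid\Delta,P):=\sup\{R\in[0,R_{\max}(\Delta)]: E_{\rm B}(R\mid\Delta,P)\le E\}$, satisfies $$R_{\rm B}(E\mid\Delta,P)=\inf_{\mu\ge0}\ \sup_{\nu\ge0}\Big[\mu E-\nu\Delta+\min_{p_Y\in\mathcal P(\mathcal Y)}G^{(\mu,\nu)}(p_Y\mid P)\Big].$$
   Context: $\mathcal X,\mathcal Y$ finite nonempty sets; $\mathcal P(\cdot)$ probability distributions. Distortion measure $d:\mathcal X\times\mathcal Y\to[0,\infty)$ with $\max_x\min_y d(x,y)=0$. Natural logs. $R(\Delta\mid q)$ is the rate-distortion function $\min\{I(q,V): \sum_{x,y}q(x)V(y|x)d(x,y)\le\Delta\}$ and $R_{\max}(\Delta)=\max_q R(\Delta\mid q)$. Blahut's exponent: $E_{\rm B}(R\mid\Delta,P)=\sup_{\rho\ge0}\Big[\rho R+\inf_{\nu\ge0}\Big\{\rho\nu\Delta-\min_{p_Y\in\mathcal P(\mathcal Y)}\log\sum_{x}P(x)\big(\sum_y p_Y(y)e^{-\nu d(x,y)}\big)^{-\rho}\Big\}\Big]$. For $\mu,\nu\ge0$: $G^{(\mu,\nu)}(p_Y\mid P)=\mu\log\sum_x P(x)\big(\sum_y p_Y(y)e^{-\nu d(x,y)}\big)^{-1/\mu}$ if $\mu>0$, and $G^{(0,\nu)}(p_Y\mid P)=-\log\min_{x}\sum_y p_Y(y)e^{-\nu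 d(x,y)}$. *)

theory Defs
  imports "HOL-Analysis.Analysis" "HOL-Library.Extended_Real"
begin

definition pdists :: "('a::finite \<Rightarrow> real) set" where
  "pdists = {p. (\<forall>a. 0 \<le> p a) \<and> (\<Sum>a\<in>UNIV. p a) = 1}"

text \<open>Channels V(y|x), written V x y.\<close>
definition channels :: "('x::finite \<Rightarrow> 'y::finite \<Rightarrow> real) set" where
  "channels = {V. \<forall>x. V x \<in> pdists}"

definition out_dist :: "('x::finite \<Rightarrow> real) \<Rightarrow> ('x \<Rightarrow> 'y::finite \<Rightarrow> real) \<Rightarrow> 'y \<Rightarrow> real" where
  "out_dist q V y = (\<Sum>x\<in>UNIV. q x * V x y)"

definition mutual_info :: "('x::finite \<Rightarrow> real) \<Rightarrow> ('x \<Rightarrow> 'y::finite \<Rightarrow> real) \<Rightarrow> real" where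
  "mutual_info q V = (\<Sum>x\<in>UNIV. \<Sum>y\<in>UNIV.
     (if q x * V x y = 0 then 0 else q x * V x y * ln (V x y / out_dist q V y)))"

definition avg_dist :: "('x::finite \<Rightarrow> real) \<Rightarrow> ('x \<Rightarrow> 'y::finite \<Rightarrow> real) \<Rightarrow> ('x \<Rightarrow> 'y \<Rightarrow> real) \<Rightarrow> real" where
  "avg_dist q V d = (\<Sum>x\<in>UNIV. \<Sum>y\<in>UNIV. q x * V x y * d x y)"

definition RD :: "('x::finite \<Rightarrow> 'y::finite \<Rightarrow> real) \<Rightarrow> real \<Rightarrow> ('x \<Rightarrow> real) \<Rightarrow> ereal" where
  "RD d \<Delta> q = (INF V\<in>{V\<in>channels. avg_dist q V d \<le> \<Delta>}. ereal (mutual_info q V))"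

definition Rmax :: "('x::finite \<Rightarrow> 'y::finite \<Rightarrow> real) \<Rightarrow> real \<Rightarrow> ereal" where
  "Rmax d \<Delta> = (SUP q\<in>pdists. RD d \<Delta> q)"

definition EB :: "('x::finite \<Rightarrow> 'y::finite \<Rightarrow> real) \<Rightarrow> real \<Rightarrow> real \<Rightarrow> ('x \<Rightarrow> real) \<Rightarrow> ereal" where
  "EB d R \<Delta> P = (SUP \<rho>\<in>{0..}. ereal (\<rho> * R) +
     (INF \<nu>\<in>{0..}. ereal (\<rho> * \<nu> * \<Delta>) -
        (INF pY\<in>(pdists :: ('y \<Rightarrow> real) set).
           ereal (ln (\<Sum>x\<in>UNIV. P x * (\<Sum>y\<in>UNIV. pY y * exp (- \<nu> * d x y)) powr (- \<rho>))))))"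

definition RB :: "('x::finite \<Rightarrow> 'y::finite \<Rightarrow> real) \<Rightarrow> real \<Rightarrow> real \<Rightarrow> ('x \<Rightarrow> real) \<Rightarrow> ereal" where
  "RB d E \<Delta> P = Sup (ereal ` {R. 0 \<le> R \<and> ereal R \<le> Rmax d \<Delta> \<and> EB d R \<Delta> P \<le> ereal E})"

definition G :: "('x::finite \<Rightarrow> 'y::finite \<Rightarrow> real) \<Rightarrow> real \<Rightarrow> real \<Rightarrow> ('y \<Rightarrow> real) \<Rightarrow> ('x \<Rightarrow> real) \<Rightarrow> real" where
  "G d \<mu> \<nu> pY P =
     (if \<mu> > 0 then \<mu> * ln (\<Sum>x\<in>UNIV. P x * (\<Sum>y\<in>UNIV. pY y * exp (- \<nu> * d x y)) powr (- 1 / \<mu>))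
      else - ln (Min (range (\<lambda>x. \<Sum>y\<in>UNIV. pY y * exp (- \<nu> * d x y)))))"

end

theory Submission
  imports Defs
begin

text \<open>
  Let L(\<rho>,\<nu>) be the minimum over p_Y of the logarithmic moment inside Blahut's exponent, so that
  E_B(R) = sup_\<rho> [\<rho>R + inf_\<nu> (\<rho>\<nu>\<Delta> - L(\<rho>,\<nu>))], while min_p_Y G^(\<mu>,\<nu>) = \<mu> L(1/\<mu>,\<nu>) for \<mu> > 0.
  Substituting \<rho> = 1/\<mu>, the condition E_B(R) \<le> E says exactly that R lies below
  sup_\<nu> [\<mu>E - \<nu>\<Delta> + min_p_Y G^(\<mu>,\<nu>)] for every \<mu> > 0; the value \<mu> = 0 is the limit \<rho> \<rightarrow> \<infinity>,
  controlled by L(\<rho>,\<nu>) \<le> \<rho> min_p_Y G^(0,\<nu>).  The side constraint R \<le> R_max(\<Delta>) costs nothing,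
  because min_p_Y G^(0,\<nu>) - \<nu>\<Delta> \<le> R_max(\<Delta>): a separating hyperplane yields an input distribution q
  under which the worst letter x is no worse than the q-average of -ln \<Sum>_y p_Y(y) exp(-\<nu> d(x,y)), and
  Gibbs' inequality bounds that average, taken at the output distribution of a channel V, by
  I(q,V) + \<nu> E[d].
\<close>

lemma Min_range_attained:
  fixes f :: "'a::finite \<Rightarrow> 'b::linorder"
  shows "\<exists>x0. Min (range f) = f x0 \<and> (\<forall>x. f x0 \<le> f x)"
proof -
  have "Min (range f) \<in> range f" by (rule Min_in) auto
  then obtain x0 where "Min (range f) = f x0" by blast
  moreover have "\<forall>x. Min (range f) \<le> f x" by simp
  ultimately show ?thesis by metis
qed

lemma one_le_powr_neg:
  fixes s \<rho> :: real
  assumes "0 < s" "s \<le> 1" "0 \<le> \<rho>"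
  shows "1 \<le> s powr (- \<rho>)"
proof -
  have "s powr \<rho> \<le> 1" using assms by (intro powr_le1) auto
  then show ?thesis using \<open>0 < s\<close> by (simp add: powr_minus one_le_inverse_iff)
qed

lemma neg_ln_convex_comb:
  fixes s1 s2 u w :: real
  assumes "0 < s1" "0 < s2" "0 \<le> u" "0 \<le> w" "u + w = 1"
  shows "- ln (u * s1 + w * s2) \<le> u * - ln s1 + w * - ln s2"
proof -
  have "u * ln s1 + w * ln s2 \<le> ln (u *\<^sub>R s1 + w *\<^sub>R s2)"
    using ln_concave assms unfolding concave_on_iff by auto
  then show ?thesis by simp
qed

lemma sum_weighted_ln_ratio_le_ln_sum:
  fixes v a :: "'y \<Rightarrow> real"
  assumes "finite A" "A \<noteq> {}" "\<And>y. y \<in> A \<Longrightarrow> 0 < v y" "\<And>y. y \<in> A \<Longrightarrow> 0 < a y" "sum v A = 1"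
  shows "(\<Sum>y\<in>A. v y * ln (a y / v y)) \<le> ln (\<Sum>y\<in>A. a y)"
proof -
  have "(\<Sum>y\<in>A. v y * ln (a y / v y)) \<le> ln (\<Sum>y\<in>A. v y * (a y / v y))"
    using concave_on_sum[OF assms(1,2) ln_concave assms(5), of "\<lambda>y. a y / v y"] assms(3,4)
    by (auto simp: less_imp_le)
  also have "(\<Sum>y\<in>A. v y * (a y / v y)) = (\<Sum>y\<in>A. a y)"
    using assms(3) by (intro sum.cong) (auto simp: less_imp_neq[symmetric])
  finally show ?thesis .
qed

lemma INF_ereal_eq_ereal_INF:
  fixes f :: "'a \<Rightarrow> real"
  assumes "A \<noteq> {}" "\<And>a. a \<in> A \<Longrightarrow> c \<le> f a"
  shows "(INF a\<in>A. ereal (f a)) = ereal (INF a\<in>A. f a)"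
proof -
  have "bdd_below (f ` A)" using assms(2) by (rule bdd_belowI2)
  then show ?thesis using ereal_Inf'[of "f ` A"] assms(1) by (simp add: image_comp)
qed

lemma INF_mult_pos:
  fixes f :: "'a \<Rightarrow> real"
  assumes c: "0 < c" and A: "A \<noteq> {}" and bdd: "\<And>a. a \<in> A \<Longrightarrow> m \<le> f a"
  shows "(INF a\<in>A. c * f a) = c * (INF a\<in>A. f a)"
proof (rule antisym)
  have "(INF a\<in>A. c * f a) / c \<le> (INF a\<in>A. f a)"
  proof (rule cINF_greatest[OF A])
    fix a assume "a \<in> A"
    then have "(INF a\<in>A. c * f a) \<le> c * f a"
      using c bdd by (intro cINF_lower bdd_belowI2[of _ "c * m"]) auto
    then show "(INF a\<in>A. c * f a) / c \<le> f a" using c by (simp add: pos_divide_le_eq mult.commute)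
  qed
  then show "(INF a\<in>A. c * f a) \<le> c * (INF a\<in>A. f a)"
    using c by (simp add: pos_divide_le_eq mult.commute)
  show "c * (INF a\<in>A. f a) \<le> (INF a\<in>A. c * f a)"
  proof (rule cINF_greatest[OF A])
    fix a assume "a \<in> A"
    then have "(INF a\<in>A. f a) \<le> f a" using bdd by (intro cINF_lower bdd_belowI2)
    then show "c * (INF a\<in>A. f a) \<le> c * f a" using c by simp
  qed
qed

lemma ereal_le_SUP_approx:
  assumes "\<And>e. 0 < e \<Longrightarrow> \<exists>x\<in>A. r < f x + e"
  shows "ereal r \<le> (SUP x\<in>A. ereal (f x))"
proof (rule ereal_le_epsilon2)
  fix e :: real assume "0 < e"
  then obtain x where x: "x \<in> A" "r < f x + e" using assms by blast
  then have "ereal r \<le> ereal (f x) + ereal e" by simp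
  also have "\<dots> \<le> (SUP x\<in>A. ereal (f x)) + ereal e" using x by (intro add_right_mono SUP_upper)
  finally show "ereal r \<le> (SUP x\<in>A. ereal (f x)) + ereal e" .
qed

lemma ex_less_of_add_INF_le:
  assumes "ereal a + (INF x\<in>A. ereal (f x)) \<le> ereal b" "0 < e"
  shows "\<exists>x\<in>A. a + f x < b + e"
proof -
  have "(INF x\<in>A. ereal (f x)) < ereal (b - a + e)"
    using assms by (cases "INF x\<in>A. ereal (f x)") auto
  then obtain x where "x \<in> A" "f x < b - a + e" by (auto simp: INF_less_iff)
  then show ?thesis by (intro bexI[of _ x]) auto
qed

definition tilt :: "('x::finite \<Rightarrow> 'y::finite \<Rightarrow> real) \<Rightarrow> ('y \<Rightarrow> real) \<Rightarrow> real \<Rightarrow> 'x \<Rightarrow> real" where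
  "tilt d pY \<nu> x = (\<Sum>y\<in>UNIV. pY y * exp (- \<nu> * d x y))"

definition log_moment :: "('x::finite \<Rightarrow> 'y::finite \<Rightarrow> real) \<Rightarrow> ('x \<Rightarrow> real) \<Rightarrow> real \<Rightarrow> real \<Rightarrow> ('y \<Rightarrow> real) \<Rightarrow> real" where
  "log_moment d P \<rho> \<nu> pY = ln (\<Sum>x\<in>UNIV. P x * tilt d pY \<nu> x powr (- \<rho>))"

lemma uniform_in_pdists: "(\<lambda>_. 1 / real CARD('a::finite)) \<in> (pdists :: ('a \<Rightarrow> real) set)"
  by (simp add: pdists_def)

lemma pdists_nonempty: "(pdists :: ('a::finite \<Rightarrow> real) set) \<noteq> {}"
  using uniform_in_pdists by blast

lemma convex_comb_in_pdists:
  assumes "p1 \<in> pdists" "p2 \<in> pdists" "0 \<le> u" "0 \<le> w" "u + w = 1"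
  shows "(\<lambda>y. u * p1 y + w * p2 y) \<in> pdists"
  using assms by (auto simp: pdists_def sum.distrib simp flip: sum_distrib_left)

lemma one_le_pdists_weighted_sum:
  assumes P: "P \<in> pdists" and f: "\<And>x. 1 \<le> f x"
  shows "1 \<le> (\<Sum>x\<in>UNIV. P x * f x)"
proof -
  have "(\<Sum>x\<in>UNIV. P x) \<le> (\<Sum>x\<in>UNIV. P x * f x)"
    using P f by (intro sum_mono) (auto simp: pdists_def intro: mult_left_mono[of 1 _ "P _", simplified])
  then show ?thesis using P by (simp add: pdists_def)
qed

lemma tilt_pos:
  assumes "pY \<in> pdists"
  shows "0 < tilt d pY \<nu> x"
proof -
  have nonneg: "\<forall>y. 0 \<le> pY y" and "(\<Sum>y\<in>UNIV. pY y) = 1" using assms by (auto simp: pdists_def)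
  then obtain y0 where "pY y0 \<noteq> 0" by (metis sum.neutral zero_neq_one)
  with nonneg have "0 < pY y0 * exp (- \<nu> * d x y0)" by (simp add: less_le)
  then show ?thesis unfolding tilt_def by (intro sum_pos2[of UNIV y0]) (auto simp: nonneg)
qed

lemma tilt_le_one:
  assumes "pY \<in> pdists" "0 \<le> \<nu>" "\<forall>x y. 0 \<le> d x y"
  shows "tilt d pY \<nu> x \<le> 1"
proof -
  have "tilt d pY \<nu> x \<le> (\<Sum>y\<in>UNIV. pY y)" unfolding tilt_def
  proof (rule sum_mono)
    fix y
    have "exp (- \<nu> * d x y) \<le> 1" using assms by simp
    then show "pY y * exp (- \<nu> * d x y) \<le> pY y" using assms(1) by (simp add: pdists_def mult_left_le)
  qed
  then show ?thesis using assms(1) by (simp add: pdists_def)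
qed

lemma tilt_convex_comb:
  "tilt d (\<lambda>y. u * p1 y + w * p2 y) \<nu> x = u * tilt d p1 \<nu> x + w * tilt d p2 \<nu> x"
  by (simp add: tilt_def sum.distrib sum_distrib_left distrib_right mult.assoc)

lemma G_pos_eq: "0 < \<mu> \<Longrightarrow> G d \<mu> \<nu> pY P = \<mu> * log_moment d P (1/\<mu>) \<nu> pY"
  by (simp add: G_def log_moment_def tilt_def)

lemma G_zero_eq: "G d 0 \<nu> pY P = - ln (Min (range (tilt d pY \<nu>)))"
  by (simp add: G_def tilt_def[abs_def])

lemma one_le_moment:
  assumes "P \<in> pdists" "pY \<in> pdists" "0 \<le> \<rho>" "0 \<le> \<nu>" "\<forall>x y. 0 \<le> d x y"
  shows "1 \<le> (\<Sum>x\<in>UNIV. P x * tilt d pY \<nu> x powr (- \<rho>))"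
  using assms by (intro one_le_pdists_weighted_sum one_le_powr_neg tilt_pos tilt_le_one) auto

lemma log_moment_nonneg:
  assumes "P \<in> pdists" "pY \<in> pdists" "0 \<le> \<rho>" "0 \<le> \<nu>" "\<forall>x y. 0 \<le> d x y"
  shows "0 \<le> log_moment d P \<rho> \<nu> pY"
  using one_le_moment[OF assms] by (simp add: log_moment_def)

lemma G_nonneg:
  assumes "P \<in> pdists" "pY \<in> pdists" "0 \<le> \<mu>" "0 \<le> \<nu>" "\<forall>x y. 0 \<le> d x y"
  shows "0 \<le> G d \<mu> \<nu> pY P"
proof (cases "\<mu> = 0")
  case True
  obtain x0 where "Min (range (tilt d pY \<nu>)) = tilt d pY \<nu> x0" using Min_range_attained by blast
  moreover have "0 < tilt d pY \<nu> x0" "tilt d pY \<nu> x0 \<le> 1" using assms by (auto intro: tilt_pos tilt_le_one)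
  ultimately show ?thesis using True by (simp add: G_zero_eq)
next
  case False
  then show ?thesis using assms by (simp add: G_pos_eq log_moment_nonneg)
qed

lemma log_moment_le_G_zero:
  assumes P: "P \<in> pdists" and pY: "pY \<in> pdists" and "0 \<le> \<rho>" "0 \<le> \<nu>" "\<forall>x y. 0 \<le> d x y"
  shows "log_moment d P \<rho> \<nu> pY \<le> \<rho> * G d 0 \<nu> pY P"
proof -
  obtain x0 where x0: "Min (range (tilt d pY \<nu>)) = tilt d pY \<nu> x0"
    and min: "\<And>x. tilt d pY \<nu> x0 \<le> tilt d pY \<nu> x" using Min_range_attained by blast
  define m where "m = tilt d pY \<nu> x0"
  have m: "0 < m" unfolding m_def using pY by (rule tilt_pos)
  have "(\<Sum>x\<in>UNIV. P x * tilt d pY \<nu> x powr (- \<rho>)) \<le> (\<Sum>x\<in>UNIV. P x * m powr (- \<rho>))"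
    using assms m min by (intro sum_mono mult_left_mono powr_mono2') (auto simp: m_def pdists_def)
  also have "\<dots> = m powr (- \<rho>)" using P by (simp add: pdists_def flip: sum_distrib_right)
  finally have "log_moment d P \<rho> \<nu> pY \<le> ln (m powr (- \<rho>))"
    unfolding log_moment_def using one_le_moment[OF assms] by (intro ln_mono) auto
  also have "\<dots> = \<rho> * G d 0 \<nu> pY P" using m by (simp add: G_zero_eq x0 m_def)
  finally show ?thesis .
qed

definition min_log_moment :: "('x::finite \<Rightarrow> 'y::finite \<Rightarrow> real) \<Rightarrow> ('x \<Rightarrow> real) \<Rightarrow> real \<Rightarrow> real \<Rightarrow> real" where
  "min_log_moment d P \<rho> \<nu> = (INF pY\<in>pdists. log_moment d P \<rho> \<nu> pY)"

definition min_G :: "('x::finite \<Rightarrow> 'y::finite \<Rightarrow> real) \<Rightarrow> ('x \<Rightarrow> real) \<Rightarrow> real \<Rightarrow> real \<Rightarrow> real" where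
  "min_G d P \<mu> \<nu> = (INF pY\<in>pdists. G d \<mu> \<nu> pY P)"

lemma min_log_moment_nonneg:
  assumes "P \<in> pdists" "0 \<le> \<rho>" "0 \<le> \<nu>" "\<forall>x y. 0 \<le> d x y"
  shows "0 \<le> min_log_moment d P \<rho> \<nu>"
  unfolding min_log_moment_def using assms pdists_nonempty
  by (intro cINF_greatest log_moment_nonneg) auto

lemma min_G_nonneg:
  assumes "P \<in> pdists" "0 \<le> \<mu>" "0 \<le> \<nu>" "\<forall>x y. 0 \<le> d x y"
  shows "0 \<le> min_G d P \<mu> \<nu>"
  unfolding min_G_def using assms pdists_nonempty
  by (intro cINF_greatest G_nonneg) auto

lemma min_G_le:
  assumes "P \<in> pdists" "pY \<in> pdists" "0 \<le> \<mu>" "0 \<le> \<nu>" "\<forall>x y. 0 \<le> d x y"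
  shows "min_G d P \<mu> \<nu> \<le> G d \<mu> \<nu> pY P"
  unfolding min_G_def using assms by (intro cINF_lower bdd_belowI2[of _ 0] G_nonneg) auto

lemma min_G_pos_eq:
  assumes "P \<in> pdists" "0 < \<mu>" "0 \<le> \<nu>" "\<forall>x y. 0 \<le> d x y"
  shows "min_G d P \<mu> \<nu> = \<mu> * min_log_moment d P (1/\<mu>) \<nu>"
  unfolding min_G_def min_log_moment_def using assms
  by (simp add: G_pos_eq INF_mult_pos[OF _ pdists_nonempty log_moment_nonneg])

lemma min_log_moment_le:
  assumes "P \<in> pdists" "pY \<in> pdists" "0 \<le> \<rho>" "0 \<le> \<nu>" "\<forall>x y. 0 \<le> d x y"
  shows "min_log_moment d P \<rho> \<nu> \<le> log_moment d P \<rho> \<nu> pY"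
  unfolding min_log_moment_def using assms
  by (intro cINF_lower bdd_belowI2[of _ 0] log_moment_nonneg) auto

lemma min_log_moment_le_min_G_zero:
  assumes "P \<in> pdists" "0 < \<rho>" "0 \<le> \<nu>" "\<forall>x y. 0 \<le> d x y"
  shows "min_log_moment d P \<rho> \<nu> \<le> \<rho> * min_G d P 0 \<nu>"
proof -
  have "min_log_moment d P \<rho> \<nu> \<le> (INF pY\<in>pdists. \<rho> * G d 0 \<nu> pY P)"
  proof (rule cINF_greatest[OF pdists_nonempty])
    fix pY :: "'b \<Rightarrow> real" assume "pY \<in> pdists"
    then show "min_log_moment d P \<rho> \<nu> \<le> \<rho> * G d 0 \<nu> pY P"
      using assms min_log_moment_le log_moment_le_G_zero by (smt (verit))
  qed
  also have "\<dots> = \<rho> * min_G d P 0 \<nu>"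
    unfolding min_G_def using assms by (intro INF_mult_pos[where m = 0] pdists_nonempty G_nonneg) auto
  finally show ?thesis .
qed

lemma gibbs_variational_ineq:
  fixes v w c :: "'y::finite \<Rightarrow> real"
  assumes v: "v \<in> pdists" and supp: "\<And>y. 0 < v y \<Longrightarrow> 0 < w y" and w: "\<And>y. 0 \<le> w y"
  shows "- ln (\<Sum>y\<in>UNIV. w y * exp (- \<nu> * c y)) \<le>
    (\<Sum>y\<in>UNIV. (if v y = 0 then 0 else v y * ln (v y / w y))) + \<nu> * (\<Sum>y\<in>UNIV. v y * c y)"
proof -
  define Y where "Y = {y. 0 < v y}"
  define a where "a y = w y * exp (- \<nu> * c y)" for y
  have on_Y: "(\<Sum>y\<in>UNIV. f y) = (\<Sum>y\<in>Y. f y)" if "\<And>y. v y = 0 \<Longrightarrow> f y = 0" for f :: "'y \<Rightarrow> real"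
    using that v by (intro sum.mono_neutral_right) (auto simp: Y_def pdists_def less_le)
  have vY: "(\<Sum>y\<in>Y. v y) = 1" using on_Y[of v] v by (simp add: pdists_def)
  then have "Y \<noteq> {}" by auto
  have v_pos: "0 < v y" if "y \<in> Y" for y using that by (simp add: Y_def)
  have a_pos: "0 < a y" if "y \<in> Y" for y using supp that by (simp add: a_def Y_def)
  have jensen: "(\<Sum>y\<in>Y. v y * ln (a y / v y)) \<le> ln (\<Sum>y\<in>Y. a y)"
    using \<open>Y \<noteq> {}\<close> v_pos a_pos vY by (intro sum_weighted_ln_ratio_le_ln_sum) auto
  have "0 < (\<Sum>y\<in>Y. a y)" using \<open>Y \<noteq> {}\<close> a_pos by (intro sum_pos) auto
  moreover have "(\<Sum>y\<in>Y. a y) \<le> (\<Sum>y\<in>UNIV. a y)" using w by (intro sum_mono2) (auto simp: a_def)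
  ultimately have "- ln (\<Sum>y\<in>UNIV. a y) \<le> - ln (\<Sum>y\<in>Y. a y)" by simp
  also have "\<dots> \<le> - (\<Sum>y\<in>Y. v y * ln (a y / v y))"
    using jensen by linarith
  also have "(\<Sum>y\<in>Y. v y * ln (a y / v y)) = - (\<Sum>y\<in>Y. v y * ln (v y / w y)) - \<nu> * (\<Sum>y\<in>Y. v y * c y)"
  proof -
    have "v y * ln (a y / v y) = - (v y * ln (v y / w y)) - \<nu> * (v y * c y)" if "y \<in> Y" for y
    proof -
      have "0 < v y" "0 < w y" using that supp by (auto simp: Y_def)
      then show ?thesis by (simp add: a_def ln_div ln_mult algebra_simps)
    qed
    then show ?thesis by (simp add: sum_subtractf sum_negf sum_distrib_left)
  qed
  also have "(\<Sum>y\<in>Y. v y * ln (v y / w y)) = (\<Sum>y\<in>UNIV. (if v y = 0 then 0 else v y * ln (v y / w y)))"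
    by (subst on_Y) (auto simp: Y_def intro: sum.cong)
  also have "(\<Sum>y\<in>Y. v y * c y) = (\<Sum>y\<in>UNIV. v y * c y)" by (subst on_Y) auto
  finally show ?thesis by (simp add: a_def)
qed

lemma out_dist_in_pdists:
  assumes q: "q \<in> pdists" and V: "V \<in> channels"
  shows "out_dist q V \<in> pdists"
proof -
  have Vx: "\<And>x. V x \<in> pdists" using V by (simp add: channels_def)
  have "0 \<le> out_dist q V y" for y unfolding out_dist_def
    using q Vx by (intro sum_nonneg mult_nonneg_nonneg) (auto simp: pdists_def)
  moreover have "(\<Sum>y\<in>UNIV. out_dist q V y) = (\<Sum>x\<in>UNIV. q x * (\<Sum>y\<in>UNIV. V x y))"
    unfolding out_dist_def by (subst sum.swap) (simp add: sum_distrib_left)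
  ultimately show ?thesis using q Vx by (simp add: pdists_def)
qed

lemma expected_neg_ln_tilt_le_mutual_info:
  assumes q: "q \<in> pdists" and V: "V \<in> channels"
  shows "(\<Sum>x\<in>UNIV. q x * - ln (tilt d (out_dist q V) \<nu> x)) \<le> mutual_info q V + \<nu> * avg_dist q V d"
proof -
  have Vx: "\<And>x. V x \<in> pdists" using V by (simp add: channels_def)
  have row: "q x * - ln (tilt d (out_dist q V) \<nu> x) \<le>
     (\<Sum>y\<in>UNIV. (if q x * V x y = 0 then 0 else q x * V x y * ln (V x y / out_dist q V y)))
     + \<nu> * (\<Sum>y\<in>UNIV. q x * V x y * d x y)" for x
  proof (cases "q x = 0")
    case False
    then have qx: "0 < q x" using q by (simp add: pdists_def less_le)
    have supp: "0 < out_dist q V y" if "0 < V x y" for y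
    proof -
      have "0 < q x * V x y" using qx that by simp
      also have "\<dots> \<le> out_dist q V y" unfolding out_dist_def using q Vx
        by (intro member_le_sum[where f = "\<lambda>x. q x * V x y"]) (auto simp: pdists_def)
      finally show ?thesis .
    qed
    have "- ln (tilt d (out_dist q V) \<nu> x) \<le>
      (\<Sum>y\<in>UNIV. (if V x y = 0 then 0 else V x y * ln (V x y / out_dist q V y))) + \<nu> * (\<Sum>y\<in>UNIV. V x y * d x y)"
      unfolding tilt_def using out_dist_in_pdists[OF q V]
      by (intro gibbs_variational_ineq[OF Vx supp]) (auto simp: pdists_def)
    from mult_left_mono[OF this, of "q x"] qx show ?thesis
      by (simp add: distrib_left sum_distrib_left mult.assoc mult.left_commute if_distrib cong: if_cong)
  qed simp
  have "(\<Sum>x\<in>UNIV. q x * - ln (tilt d (out_dist q V) \<nu> x)) \<le>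
    (\<Sum>x\<in>UNIV. (\<Sum>y\<in>UNIV. (if q x * V x y = 0 then 0 else q x * V x y * ln (V x y / out_dist q V y)))
     + \<nu> * (\<Sum>y\<in>UNIV. q x * V x y * d x y))"
    by (intro sum_mono row)
  also have "\<dots> = mutual_info q V + \<nu> * avg_dist q V d"
    by (simp add: mutual_info_def avg_dist_def sum.distrib sum_distrib_left)
  finally show ?thesis .
qed

lemma pdist_separating_upward_closed:
  fixes U :: "(real^'x::finite) set"
  assumes "convex U" "0 \<notin> U" and z0: "z0 \<in> U"
    and up: "\<And>z z'. z \<in> U \<Longrightarrow> (\<And>x. z$x \<le> z'$x) \<Longrightarrow> z' \<in> U"
  shows "\<exists>q\<in>pdists. \<forall>z\<in>U. 0 \<le> (\<Sum>x\<in>UNIV. q x * z$x)"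
proof -
  obtain a :: "real^'x" where "a \<noteq> 0" and a: "\<forall>z\<in>U. 0 \<le> inner a z"
    using separating_hyperplane_set_0[OF assms(1,2)] by blast
  have a_nonneg: "0 \<le> a$i" for i
  proof (rule ccontr)
    assume "\<not> 0 \<le> a$i"
    define t where "t = (\<bar>inner a z0\<bar> + 1) / - a$i"
    have "t * a$i = - (\<bar>inner a z0\<bar> + 1)" using \<open>\<not> 0 \<le> a$i\<close> by (simp add: t_def)
    moreover have "z0 + t *\<^sub>R axis i 1 \<in> U"
      using \<open>\<not> 0 \<le> a$i\<close> by (intro up[OF z0]) (simp add: t_def axis_def divide_nonneg_neg)
    then have "0 \<le> inner a (z0 + t *\<^sub>R axis i 1)" using a by blast
    then have "0 \<le> inner a z0 + t * a$i" by (simp add: inner_add_right inner_axis)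
    ultimately show False by linarith
  qed
  define A where "A = (\<Sum>x\<in>UNIV. a$x)"
  have "0 < A"
  proof -
    obtain i where "a$i \<noteq> 0" using \<open>a \<noteq> 0\<close> by (metis vec_eq_iff zero_index)
    then show ?thesis unfolding A_def using a_nonneg by (intro sum_pos2[of UNIV i]) (auto simp: less_le)
  qed
  define q where "q x = a$x / A" for x
  have "q \<in> pdists" using a_nonneg \<open>0 < A\<close> by (simp add: pdists_def q_def A_def flip: sum_divide_distrib)
  moreover have "(\<Sum>x\<in>UNIV. q x * z$x) = inner a z / A" for z
    by (simp add: q_def inner_vec_def sum_divide_distrib)
  ultimately show ?thesis using a \<open>0 < A\<close> by (metis divide_nonneg_pos)
qed

lemma minimax_pdists:
  fixes \<phi> :: "('y::finite \<Rightarrow> real) \<Rightarrow> 'x::finite \<Rightarrow> real"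
  assumes convex: "\<And>p1 p2 u w x. p1 \<in> pdists \<Longrightarrow> p2 \<in> pdists \<Longrightarrow> 0 \<le> u \<Longrightarrow> 0 \<le> w \<Longrightarrow> u + w = 1 \<Longrightarrow>
      \<phi> (\<lambda>y. u * p1 y + w * p2 y) x \<le> u * \<phi> p1 x + w * \<phi> p2 x"
    and max_ge: "\<And>p. p \<in> pdists \<Longrightarrow> \<exists>x. v \<le> \<phi> p x"
  shows "\<exists>q\<in>pdists. \<forall>p\<in>pdists. v \<le> (\<Sum>x\<in>UNIV. q x * \<phi> p x)"
proof -
  define U where "U = {z :: real^'x. \<exists>p\<in>pdists. \<forall>x. \<phi> p x - v < z$x}"
  have above: "(\<chi> x. \<phi> p x - v + e) \<in> U" if "p \<in> pdists" "0 < e" for p e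
    using that by (auto simp: U_def intro!: bexI[of _ p])
  have "convex U"
  proof (rule convexI)
    fix z1 z2 :: "real^'x" and u w :: real
    assume "z1 \<in> U" "z2 \<in> U" and uw: "0 \<le> u" "0 \<le> w" "u + w = 1"
    then obtain p1 p2 where p: "p1 \<in> pdists" "p2 \<in> pdists"
      and z: "\<And>x. \<phi> p1 x - v < z1$x" "\<And>x. \<phi> p2 x - v < z2$x" by (auto simp: U_def)
    have "\<phi> (\<lambda>y. u * p1 y + w * p2 y) x - v < (u *\<^sub>R z1 + w *\<^sub>R z2)$x" for x
    proof -
      have "u * (\<phi> p1 x - v) + w * (\<phi> p2 x - v) < u * z1$x + w * z2$x"
        using uw z[of x] by (smt (verit) mult_left_mono mult_strict_left_mono)
      moreover have "u * (\<phi> p1 x - v) + w * (\<phi> p2 x - v) = u * \<phi> p1 x + w * \<phi> p2 x - (u + w) * v"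
        by (simp add: algebra_simps)
      ultimately show ?thesis using convex[OF p uw, of x] uw(3) by simp
    qed
    then show "u *\<^sub>R z1 + w *\<^sub>R z2 \<in> U" using p uw by (auto simp: U_def intro!: convex_comb_in_pdists)
  qed
  moreover have "0 \<notin> U"
  proof
    assume "0 \<in> U"
    then obtain p where "p \<in> pdists" "\<And>x. \<phi> p x < v" by (auto simp: U_def)
    with max_ge show False by (meson not_less)
  qed
  moreover have "\<And>z z'. z \<in> U \<Longrightarrow> (\<And>x. z$x \<le> z'$x) \<Longrightarrow> z' \<in> U"
    unfolding U_def by (blast intro: less_le_trans)
  ultimately obtain q where q: "q \<in> pdists" and sep: "\<forall>z\<in>U. 0 \<le> (\<Sum>x\<in>UNIV. q x * z$x)"
    using pdist_separating_upward_closed above[OF uniform_in_pdists zero_less_one] by blast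
  have "v \<le> (\<Sum>x\<in>UNIV. q x * \<phi> p x)" if p: "p \<in> pdists" for p
  proof (rule field_le_epsilon)
    fix e :: real assume "0 < e"
    then have "0 \<le> (\<Sum>x\<in>UNIV. q x * (\<phi> p x - v + e))" using sep above[OF p] by fastforce
    also have "\<dots> = (\<Sum>x\<in>UNIV. q x * \<phi> p x) - v + e"
      using q by (simp add: pdists_def algebra_simps sum.distrib sum_subtractf flip: sum_distrib_left)
    finally show "v \<le> (\<Sum>x\<in>UNIV. q x * \<phi> p x) + e" by simp
  qed
  then show ?thesis using q by blast
qed

lemma min_G_zero_le_Rmax:
  fixes d :: "'x::finite \<Rightarrow> 'y::finite \<Rightarrow> real"
  assumes P: "P \<in> pdists" and d: "\<forall>x y. 0 \<le> d x y" and \<nu>: "0 \<le> \<nu>"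
  shows "ereal (min_G d P 0 \<nu> - \<nu> * \<Delta>) \<le> Rmax d \<Delta>"
proof -
  have "\<exists>q\<in>pdists. \<forall>pY\<in>(pdists :: ('y \<Rightarrow> real) set).
          min_G d P 0 \<nu> \<le> (\<Sum>x\<in>UNIV. q x * - ln (tilt d pY \<nu> x))"
  proof (rule minimax_pdists)
    fix p1 p2 :: "'y \<Rightarrow> real" and u w :: real and x
    assume "p1 \<in> pdists" "p2 \<in> pdists" "0 \<le> u" "0 \<le> w" "u + w = 1"
    then show "- ln (tilt d (\<lambda>y. u * p1 y + w * p2 y) \<nu> x) \<le> u * - ln (tilt d p1 \<nu> x) + w * - ln (tilt d p2 \<nu> x)"
      by (simp only: tilt_convex_comb) (intro neg_ln_convex_comb tilt_pos)
  next
    fix pY :: "'y \<Rightarrow> real" assume "pY \<in> pdists"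
    moreover obtain x0 where "Min (range (tilt d pY \<nu>)) = tilt d pY \<nu> x0"
      using Min_range_attained by blast
    ultimately have "min_G d P 0 \<nu> \<le> - ln (tilt d pY \<nu> x0)"
      using min_G_le[OF P _ _ \<nu> d] by (fastforce simp: G_zero_eq)
    then show "\<exists>x. min_G d P 0 \<nu> \<le> - ln (tilt d pY \<nu> x)" by blast
  qed
  then obtain q where q: "q \<in> pdists"
    and minimax: "\<And>pY. pY \<in> pdists \<Longrightarrow> min_G d P 0 \<nu> \<le> (\<Sum>x\<in>UNIV. q x * - ln (tilt d pY \<nu> x))"
    by blast
  have "ereal (min_G d P 0 \<nu> - \<nu> * \<Delta>) \<le> RD d \<Delta> q"
    unfolding RD_def
  proof (rule INF_greatest)
    fix V assume "V \<in> {V \<in> channels. avg_dist q V d \<le> \<Delta>}"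
    then have V: "V \<in> channels" and "avg_dist q V d \<le> \<Delta>" by auto
    then have "\<nu> * avg_dist q V d \<le> \<nu> * \<Delta>" using \<nu> by (intro mult_left_mono)
    moreover have "min_G d P 0 \<nu> \<le> mutual_info q V + \<nu> * avg_dist q V d"
      using minimax[OF out_dist_in_pdists[OF q V]] expected_neg_ln_tilt_le_mutual_info[OF q V, of d \<nu>]
      by linarith
    ultimately show "ereal (min_G d P 0 \<nu> - \<nu> * \<Delta>) \<le> ereal (mutual_info q V)" by simp
  qed
  also have "\<dots> \<le> Rmax d \<Delta>" unfolding Rmax_def using q by (rule SUP_upper)
  finally show ?thesis .
qed

text \<open>The duality between the two sides only uses these properties of \<open>L\<close> (the minimised logarithmic
  moment), \<open>Gm\<close> (the minimised \<open>G\<close>) and \<open>Rm\<close> (the maximal rate).\<close>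
locale exponent_duality =
  fixes L Gm :: "real \<Rightarrow> real \<Rightarrow> real" and Rm :: ereal and \<Delta> E :: real
  assumes Gm_scale: "\<And>\<mu> \<nu>. 0 < \<mu> \<Longrightarrow> 0 \<le> \<nu> \<Longrightarrow> Gm \<mu> \<nu> = \<mu> * L (1/\<mu>) \<nu>"
    and L_le_Gm_zero: "\<And>\<rho> \<nu>. 0 < \<rho> \<Longrightarrow> 0 \<le> \<nu> \<Longrightarrow> L \<rho> \<nu> \<le> \<rho> * Gm 0 \<nu>"
    and L_nonneg_at_zero: "\<And>\<rho>. 0 \<le> \<rho> \<Longrightarrow> 0 \<le> L \<rho> 0"
    and Gm_zero_le_Rm: "\<And>\<nu>. 0 \<le> \<nu> \<Longrightarrow> ereal (Gm 0 \<nu> - \<nu> * \<Delta>) \<le> Rm"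
    and Rm_nonneg: "0 \<le> Rm"
    and E_nonneg: "0 \<le> E"
begin

definition exponent_le :: "real \<Rightarrow> bool" where
  "exponent_le R \<longleftrightarrow>
     (\<forall>\<rho>\<ge>0. ereal (\<rho> * R) + (INF \<nu>\<in>{0..}. ereal (\<rho> * \<nu> * \<Delta> - L \<rho> \<nu>)) \<le> ereal E)"

definition dual :: "real \<Rightarrow> ereal" where
  "dual \<mu> = (SUP \<nu>\<in>{0..}. ereal (\<mu> * E - \<nu> * \<Delta> + Gm \<mu> \<nu>))"

lemma exponent_le_zero: "exponent_le 0"
  unfolding exponent_le_def
proof (intro allI impI)
  fix \<rho> :: real assume "0 \<le> \<rho>"
  have "(INF \<nu>\<in>{0..}. ereal (\<rho> * \<nu> * \<Delta> - L \<rho> \<nu>)) \<le> ereal (\<rho> * 0 * \<Delta> - L \<rho> 0)"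
    by (intro INF_lower) auto
  also have "\<dots> \<le> ereal E" using L_nonneg_at_zero[OF \<open>0 \<le> \<rho>\<close>] E_nonneg by simp
  finally show "ereal (\<rho> * 0) + (INF \<nu>\<in>{0..}. ereal (\<rho> * \<nu> * \<Delta> - L \<rho> \<nu>)) \<le> ereal E" by simp
qed

lemma le_dual_if_exponent_le:
  assumes R: "exponent_le R" and "0 \<le> \<mu>"
  shows "ereal R \<le> dual \<mu>"
  unfolding dual_def
proof (rule ereal_le_SUP_approx)
  fix e :: real assume e: "0 < e"
  have approx: "\<exists>\<nu>\<in>{0..}. \<rho> * R + (\<rho> * \<nu> * \<Delta> - L \<rho> \<nu>) < E + e'" if "0 \<le> \<rho>" "0 < e'" for \<rho> e'
    using R that by (intro ex_less_of_add_INF_le) (auto simp: exponent_le_def)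
  show "\<exists>\<nu>\<in>{0..}. R < \<mu> * E - \<nu> * \<Delta> + Gm \<mu> \<nu> + e"
  proof (cases "\<mu> = 0")
    case True
    \<comment> \<open>\<open>\<mu> = 0\<close> is approached by letting \<open>\<rho>\<close> grow like \<open>1/e\<close>.\<close>
    define \<rho> where "\<rho> = (E + 1) / e"
    have \<rho>: "0 < \<rho>" "\<rho> * e = E + 1" using e E_nonneg by (auto simp: \<rho>_def)
    obtain \<nu> where \<nu>: "0 \<le> \<nu>" and lt: "\<rho> * R + (\<rho> * \<nu> * \<Delta> - L \<rho> \<nu>) < E + 1"
      using approx[of \<rho> 1] \<rho> by auto
    have "\<rho> * R < \<rho> * (Gm 0 \<nu> - \<nu> * \<Delta> + e)"
      using lt L_le_Gm_zero[OF \<rho>(1) \<nu>] \<rho>(2) by (simp add: algebra_simps)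
    then show ?thesis using \<rho>(1) \<nu> True by auto
  next
    case False
    then have \<mu>: "0 < \<mu>" using \<open>0 \<le> \<mu>\<close> by simp
    have "0 \<le> 1/\<mu>" "0 < e/\<mu>" using \<mu> e by auto
    then obtain \<nu> where \<nu>: "0 \<le> \<nu>" and lt: "1/\<mu> * R + (1/\<mu> * \<nu> * \<Delta> - L (1/\<mu>) \<nu>) < E + e/\<mu>"
      using approx by blast
    moreover have "\<mu> * (1/\<mu> * R + (1/\<mu> * \<nu> * \<Delta> - L (1/\<mu>) \<nu>)) = R + \<nu> * \<Delta> - \<mu> * L (1/\<mu>) \<nu>"
      "\<mu> * (E + e/\<mu>) = \<mu> * E + e" using \<mu> by (simp_all add: algebra_simps)
    ultimately have "R + \<nu> * \<Delta> - \<mu> * L (1/\<mu>) \<nu> < \<mu> * E + e"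
      using mult_strict_left_mono[OF lt \<mu>] by simp
    then show ?thesis using Gm_scale[OF \<mu> \<nu>] \<nu> by (intro bexI[of _ \<nu>]) auto
  qed
qed

lemma exponent_le_if_less_dual:
  assumes less: "\<And>\<mu>. 0 \<le> \<mu> \<Longrightarrow> ereal R < dual \<mu>"
  shows "exponent_le R"
  unfolding exponent_le_def
proof (intro allI impI)
  fix \<rho> :: real assume "0 \<le> \<rho>"
  show "ereal (\<rho> * R) + (INF \<nu>\<in>{0..}. ereal (\<rho> * \<nu> * \<Delta> - L \<rho> \<nu>)) \<le> ereal E"
  proof (cases "\<rho> = 0")
    case True
    have "ereal (0 * 0) + (INF \<nu>\<in>{0..}. ereal (0 * \<nu> * \<Delta> - L 0 \<nu>)) \<le> ereal E"
      using exponent_le_zero unfolding exponent_le_def by blast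
    then show ?thesis using True by simp
  next
    case False
    then have \<rho>: "0 < \<rho>" using \<open>0 \<le> \<rho>\<close> by simp
    have "ereal R < dual (1/\<rho>)" using less \<rho> by simp
    then obtain \<nu> where \<nu>: "0 \<le> \<nu>" and lt: "R < 1/\<rho> * E - \<nu> * \<Delta> + Gm (1/\<rho>) \<nu>"
      by (auto simp: dual_def less_SUP_iff)
    have "\<rho> * (1/\<rho> * E - \<nu> * \<Delta> + Gm (1/\<rho>) \<nu>) = E - \<rho> * \<nu> * \<Delta> + L \<rho> \<nu>"
      using Gm_scale[of "1/\<rho>" \<nu>] \<rho> \<nu> by (simp add: algebra_simps)
    then have lt': "\<rho> * R + (\<rho> * \<nu> * \<Delta> - L \<rho> \<nu>) < E"
      using mult_strict_left_mono[OF lt \<rho>] by simp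
    have "ereal (\<rho> * R) + (INF \<nu>\<in>{0..}. ereal (\<rho> * \<nu> * \<Delta> - L \<rho> \<nu>))
        \<le> ereal (\<rho> * R) + ereal (\<rho> * \<nu> * \<Delta> - L \<rho> \<nu>)"
      using \<nu> by (intro add_left_mono INF_lower) auto
    also have "\<dots> \<le> ereal E" using lt' by simp
    finally show ?thesis .
  qed
qed

lemma le_Rm_if_less_dual_zero:
  assumes "ereal R < dual 0"
  shows "ereal R \<le> Rm"
proof -
  obtain \<nu> where "0 \<le> \<nu>" "R < Gm 0 \<nu> - \<nu> * \<Delta>" using assms by (auto simp: dual_def less_SUP_iff)
  then show ?thesis using Gm_zero_le_Rm[of \<nu>] by (metis ereal_less_eq(3) less_imp_le order.trans)
qed

theorem Sup_rates_eq_INF_dual: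
  "Sup (ereal ` {R. 0 \<le> R \<and> ereal R \<le> Rm \<and> exponent_le R}) = (INF \<mu>\<in>{0..}. dual \<mu>)"
    (is "Sup (ereal ` ?S) = ?T")
proof (rule antisym)
  show "Sup (ereal ` ?S) \<le> ?T"
    using le_dual_if_exponent_le by (auto intro!: Sup_least INF_greatest)
next
  have "ereal 0 \<le> Rm" using Rm_nonneg by (simp only: zero_ereal_def)
  then have "0 \<in> ?S" using exponent_le_zero by simp
  then have "ereal 0 \<le> Sup (ereal ` ?S)" by (intro Sup_upper) auto
  show "?T \<le> Sup (ereal ` ?S)"
  proof (rule ccontr)
    assume "\<not> ?T \<le> Sup (ereal ` ?S)"
    then have "Sup (ereal ` ?S) < ?T" by (simp add: not_le)
    then obtain R where R: "Sup (ereal ` ?S) < ereal R" "ereal R < ?T"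
      using ereal_dense2 by blast
    have "ereal 0 < ereal R" using \<open>ereal 0 \<le> Sup (ereal ` ?S)\<close> R(1) by (rule le_less_trans)
    have less: "ereal R < dual \<mu>" if "0 \<le> \<mu>" for \<mu>
    proof -
      have "?T \<le> dual \<mu>" using that by (intro INF_lower) auto
      with R(2) show ?thesis by (rule less_le_trans)
    qed
    have "R \<in> ?S"
      using \<open>ereal 0 < ereal R\<close> le_Rm_if_less_dual_zero[OF less] exponent_le_if_less_dual[OF less] by simp
    then have "ereal R \<le> Sup (ereal ` ?S)" by (intro Sup_upper) auto
    with R(1) show False by (simp add: not_le[symmetric])
  qed
qed

end

lemma Rmax_nonneg:
  fixes d :: "'x::finite \<Rightarrow> 'y::finite \<Rightarrow> real"
  assumes "\<forall>x y. 0 \<le> d x y"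
  shows "0 \<le> Rmax d \<Delta>"
proof -
  have "ereal (min_G d (\<lambda>_. 1 / real CARD('x)) 0 0 - 0 * \<Delta>) \<le> Rmax d \<Delta>"
    using min_G_zero_le_Rmax[OF uniform_in_pdists assms order_refl] .
  moreover have "0 \<le> min_G d (\<lambda>_. 1 / real CARD('x)) 0 0"
    using min_G_nonneg[OF uniform_in_pdists order_refl order_refl assms] .
  ultimately show ?thesis by (simp add: order_trans[rotated])
qed

lemma INF_log_moment_eq_min_log_moment:
  assumes "P \<in> pdists" "0 \<le> \<rho>" "0 \<le> \<nu>" "\<forall>x y. 0 \<le> d x y"
  shows "(INF pY\<in>pdists. ereal (log_moment d P \<rho> \<nu> pY)) = ereal (min_log_moment d P \<rho> \<nu>)"
  unfolding min_log_moment_def using assms pdists_nonempty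
  by (intro INF_ereal_eq_ereal_INF[where c = 0] log_moment_nonneg) auto

lemma EB_eq:
  assumes "P \<in> pdists" "\<forall>x y. 0 \<le> d x y"
  shows "EB d R \<Delta> P =
    (SUP \<rho>\<in>{0..}. ereal (\<rho> * R) + (INF \<nu>\<in>{0..}. ereal (\<rho> * \<nu> * \<Delta> - min_log_moment d P \<rho> \<nu>)))"
proof -
  have "ln (\<Sum>x\<in>UNIV. P x * (\<Sum>y\<in>UNIV. pY y * exp (- \<nu> * d x y)) powr (- \<rho>)) = log_moment d P \<rho> \<nu> pY"
    for \<rho> \<nu> pY by (simp add: log_moment_def tilt_def)
  then show ?thesis
    unfolding EB_def using assms by (intro SUP_cong INF_cong refl) (simp add: INF_log_moment_eq_min_log_moment)
qed

lemma INF_G_eq_min_G: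
  assumes "P \<in> pdists" "0 \<le> \<mu>" "0 \<le> \<nu>" "\<forall>x y. 0 \<le> d x y"
  shows "(INF pY\<in>pdists. ereal (G d \<mu> \<nu> pY P)) = ereal (min_G d P \<mu> \<nu>)"
  unfolding min_G_def using assms pdists_nonempty
  by (intro INF_ereal_eq_ereal_INF[where c = 0] G_nonneg) auto

theorem theorem2:
  fixes d :: "'x::finite \<Rightarrow> 'y::finite \<Rightarrow> real"
    and P :: "'x \<Rightarrow> real" and \<Delta> E :: real
  assumes d_nonneg: "\<forall>x y. 0 \<le> d x y"
    and d_zero: "Max (range (\<lambda>x. Min (range (d x)))) = 0"
    and P: "P \<in> pdists"
    and Delta: "0 \<le> \<Delta>"
    and E: "0 \<le> E"
  shows "RB d E \<Delta> P =
    (INF \<mu>\<in>{0..}. SUP \<nu>\<in>{0..}.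
       ereal (\<mu> * E - \<nu> * \<Delta>) + (INF pY\<in>(pdists :: ('y \<Rightarrow> real) set). ereal (G d \<mu> \<nu> pY P)))"
proof -
  interpret exponent_duality "min_log_moment d P" "min_G d P" "Rmax d \<Delta>" \<Delta> E
    using P d_nonneg E
    by unfold_locales (auto intro: min_G_pos_eq min_log_moment_le_min_G_zero min_log_moment_nonneg
        min_G_zero_le_Rmax Rmax_nonneg)
  have "RB d E \<Delta> P = Sup (ereal ` {R. 0 \<le> R \<and> ereal R \<le> Rmax d \<Delta> \<and> exponent_le R})"
    unfolding RB_def EB_eq[OF P d_nonneg] exponent_le_def by (simp add: SUP_le_iff Ball_def)
  also have "\<dots> = (INF \<mu>\<in>{0..}. dual \<mu>)" by (rule Sup_rates_eq_INF_dual)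
  also have "\<dots> = (INF \<mu>\<in>{0..}. SUP \<nu>\<in>{0..}.
       ereal (\<mu> * E - \<nu> * \<Delta>) + (INF pY\<in>(pdists :: ('y \<Rightarrow> real) set). ereal (G d \<mu> \<nu> pY P)))"
    unfolding dual_def using P d_nonneg by (intro INF_cong SUP_cong refl) (simp add: INF_G_eq_min_G)
  finally show ?thesis .
qed

end
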